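(* Let $\Lambda$ be a finite $k$-graph without sources, $F$ a well chosen sequence for $\Lambda$, and $C$ an $F$-harmonic component. Then there is a unique vector $x_F^C\in[0,\infty)^{\Lambda^0}$ with $\sum_v (x_F^C)_v=1$ such that (1) $A_Fx_F^C=\rho(A_F^C)\,x_F^C$, and (2) $(x_F^C)_v=0$ for all $v\notin\overline C$. Moreover $(x_F^C)_v>0$ for all $v\in\overline C$, and $x_F^C|_C=c\,x$ for some $c>0$, where $x$ is the Perron–Frobenius eigenvector of $A_F^C$ of unit $1$-norm.
   Context: A $k$-graph $(\Lambda,d)$ is a countable small category with functor $d:\Lambda\to\mathbb N^k$ having the unique factorisation property (for $d(\lambda)=m+n$ there are unique $\mu,\nu$ with $d(\mu)=m,d(\nu)=n,\lambda=\mu\nu$). $\Lambda^0=d^{-1}(0)$ are the vertices, $\Lambda^n=d^{-1}(n)$, $r,s$ range and source, $v\Lambda^nw=\{\lambda\in\Lambda^n:r(\lambda)=v,s(\lambda)=w\}$, $v\Lambda w=\bigcup_n v\Lambda^n w$, and for $V,W\subseteq\Lambda^0$, $V\Lambda W=\bigcup_{v\in V,w\in W}v\Lambda w$. Finite: each $\Lambda^n$ finite; without sources: $v\Lambda^n\neq\emptyset$ for all $v,n$. Vertex matrices $A_i(v,w)=|v\Lambda^{e_i}w|$, $A^n=\prod_iA_i^{n_i}$ (so $A^n(v,w)=|v\Lambda^nw|$). Define $v\le w$ iff $v\Lambda w\ne\emptyset$ and $v\sim w$ iff $v\le w$ and $w\le v$; the equivalence classes are components. A component $C$ is trivial if $C\Lambda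 C=\{v\}$ for a single vertex $v$, non-trivial otherwise. The closure of $V\subseteq\Lambda^0$ is $\overline V=\{w\in\Lambda^0:w\Lambda V\ne\emptyset\}$. For a $\Lambda^0\times\Lambda^0$ matrix $B$ and $R,S\subseteq\Lambda^0$, $B^{R,S}$ is the submatrix with rows $R$ and columns $S$, $B^S=B^{S,S}$, $x|_S$ is restriction of a vector, and $\rho$ denotes spectral radius. For a finite sequence $F=(a_1,\dots,a_m)$ in $\mathbb N^k\setminus\{0\}$ (repetitions allowed), $A_F=\sum_{j=1}^mA^{a_j}$, and $A_F^{R,S}$ means $(A_F)^{R,S}$; $F$ is well chosen if for all $v,w$: $A_F(v,w)>0$ iff $v\Lambda^lw\neq\emptyset$ for some $l\in\mathbb N^k\setminus\{0\}$. A non-trivial component $C$ is $F$-harmonic if either $\overline C\setminus C=\emptyset$ or $\rho(A_F^C)>\rho(A_F^{\overline C\setminus C})$. *)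

theory Defs
  imports Complex_Main "HOL-Library.Countable_Set"
begin

text \<open>A k-graph is represented by a set P of morphisms of type 'p (objects are
identified with identity morphisms, as in the paper), range and source maps
r, s, a composition cmp (meaningful for composable pairs), and a degree
map d into \<nat>^k, where \<nat>^k is rendered as 'k \<Rightarrow> nat for a finite type 'k
with CARD('k) = k.\<close>

definition kgraph ::
  "'p set \<Rightarrow> ('p \<Rightarrow> 'p) \<Rightarrow> ('p \<Rightarrow> 'p) \<Rightarrow> ('p \<Rightarrow> 'p \<Rightarrow> 'p) \<Rightarrow> ('p \<Rightarrow> ('k::finite \<Rightarrow> nat)) \<Rightarrow> bool"
  where "kgraph P r s cmp d \<longleftrightarrow>
    countable P \<and>
    (\<forall>l\<in>P. r l \<in> P \<and> s l \<in> P) \<and>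
    (\<forall>l\<in>P. r (r l) = r l \<and> s (r l) = r l \<and> r (s l) = s l \<and> s (s l) = s l) \<and>
    (\<forall>l\<in>P. cmp (r l) l = l \<and> cmp l (s l) = l) \<and>
    (\<forall>l\<in>P. \<forall>u\<in>P. s l = r u \<longrightarrow>
        cmp l u \<in> P \<and> r (cmp l u) = r l \<and> s (cmp l u) = s u) \<and>
    (\<forall>l\<in>P. \<forall>u\<in>P. \<forall>t\<in>P. s l = r u \<longrightarrow> s u = r t \<longrightarrow>
        cmp (cmp l u) t = cmp l (cmp u t)) \<and>
    (\<forall>l\<in>P. d (r l) = (\<lambda>_. 0)) \<and>
    (\<forall>l\<in>P. \<forall>u\<in>P. s l = r u \<longrightarrow> d (cmp l u) = (\<lambda>i. d l i + d u i)) \<and>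
    (\<forall>l\<in>P. \<forall>m n. d l = (\<lambda>i. m i + n i) \<longrightarrow>
        (\<exists>!ut. case ut of (u, t) \<Rightarrow> u \<in> P \<and> t \<in> P \<and> s u = r t \<and> d u = m \<and> d t = n \<and> l = cmp u t))"

definition verts :: "'p set \<Rightarrow> ('p \<Rightarrow> ('k \<Rightarrow> nat)) \<Rightarrow> 'p set"
  where "verts P d = {l\<in>P. d l = (\<lambda>_. 0)}"

definition finite_kgraph :: "'p set \<Rightarrow> ('p \<Rightarrow> ('k \<Rightarrow> nat)) \<Rightarrow> bool"
  where "finite_kgraph P d \<longleftrightarrow> (\<forall>n. finite {l\<in>P. d l = n})"

definition no_sources :: "'p set \<Rightarrow> ('p \<Rightarrow> 'p) \<Rightarrow> ('p \<Rightarrow> ('k \<Rightarrow> nat)) \<Rightarrow> bool"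
  where "no_sources P r d \<longleftrightarrow> (\<forall>v\<in>verts P d. \<forall>n. \<exists>l\<in>P. r l = v \<and> d l = n)"

definition vmat :: "'p set \<Rightarrow> ('p \<Rightarrow> 'p) \<Rightarrow> ('p \<Rightarrow> 'p) \<Rightarrow> ('p \<Rightarrow> ('k \<Rightarrow> nat)) \<Rightarrow> ('k \<Rightarrow> nat) \<Rightarrow> 'p \<Rightarrow> 'p \<Rightarrow> real"
  where "vmat P r s d n v w = real (card {l\<in>P. d l = n \<and> r l = v \<and> s l = w})"

definition AF :: "'p set \<Rightarrow> ('p \<Rightarrow> 'p) \<Rightarrow> ('p \<Rightarrow> 'p) \<Rightarrow> ('p \<Rightarrow> ('k \<Rightarrow> nat)) \<Rightarrow> ('k \<Rightarrow> nat) list \<Rightarrow> 'p \<Rightarrow> 'p \<Rightarrow> real"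
  where "AF P r s d F v w = (\<Sum>j<length F. vmat P r s d (F ! j) v w)"

definition well_chosen :: "'p set \<Rightarrow> ('p \<Rightarrow> 'p) \<Rightarrow> ('p \<Rightarrow> 'p) \<Rightarrow> ('p \<Rightarrow> ('k \<Rightarrow> nat)) \<Rightarrow> ('k \<Rightarrow> nat) list \<Rightarrow> bool"
  where "well_chosen P r s d F \<longleftrightarrow>
    (\<forall>a\<in>set F. a \<noteq> (\<lambda>_. 0)) \<and>
    (\<forall>v\<in>verts P d. \<forall>w\<in>verts P d.
       (AF P r s d F v w > 0 \<longleftrightarrow>
        (\<exists>l. l \<noteq> (\<lambda>_. 0) \<and> (\<exists>p\<in>P. d p = l \<and> r p = v \<and> s p = w))))"

definition vle :: "'p set \<Rightarrow> ('p \<Rightarrow> 'p) \<Rightarrow> ('p \<Rightarrow> 'p) \<Rightarrow> 'p \<Rightarrow> 'p \<Rightarrow> bool"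
  where "vle P r s v w \<longleftrightarrow> (\<exists>l\<in>P. r l = v \<and> s l = w)"

definition is_component :: "'p set \<Rightarrow> ('p \<Rightarrow> 'p) \<Rightarrow> ('p \<Rightarrow> 'p) \<Rightarrow> ('p \<Rightarrow> ('k \<Rightarrow> nat)) \<Rightarrow> 'p set \<Rightarrow> bool"
  where "is_component P r s d C \<longleftrightarrow>
    (\<exists>v\<in>verts P d. C = {w\<in>verts P d. vle P r s v w \<and> vle P r s w v})"

definition paths_between :: "'p set \<Rightarrow> ('p \<Rightarrow> 'p) \<Rightarrow> ('p \<Rightarrow> 'p) \<Rightarrow> 'p set \<Rightarrow> 'p set \<Rightarrow> 'p set"
  where "paths_between P r s V W = {l\<in>P. r l \<in> V \<and> s l \<in> W}"

definition nontrivial_component :: "'p set \<Rightarrow> ('p \<Rightarrow> 'p) \<Rightarrow> ('p \<Rightarrow> 'p) \<Rightarrow> ('p \<Rightarrow> ('k \<Rightarrow> nat)) \<Rightarrow> 'p set \<Rightarrow> bool"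
  where "nontrivial_component P r s d C \<longleftrightarrow>
    is_component P r s d C \<and> \<not> (\<exists>v\<in>verts P d. paths_between P r s C C = {v})"

definition vclosure :: "'p set \<Rightarrow> ('p \<Rightarrow> 'p) \<Rightarrow> ('p \<Rightarrow> 'p) \<Rightarrow> ('p \<Rightarrow> ('k \<Rightarrow> nat)) \<Rightarrow> 'p set \<Rightarrow> 'p set"
  where "vclosure P r s d V = {w\<in>verts P d. paths_between P r s {w} V \<noteq> {}}"

definition spec_rad :: "'p set \<Rightarrow> ('p \<Rightarrow> 'p \<Rightarrow> real) \<Rightarrow> real"
  where "spec_rad S B = Max {cmod u | u. \<exists>x :: 'p \<Rightarrow> complex. (\<exists>v\<in>S. x v \<noteq> 0) \<and>
           (\<forall>v\<in>S. (\<Sum>w\<in>S. complex_of_real (B v w) * x w) = u * x v)}"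

definition F_harmonic :: "'p set \<Rightarrow> ('p \<Rightarrow> 'p) \<Rightarrow> ('p \<Rightarrow> 'p) \<Rightarrow> ('p \<Rightarrow> ('k \<Rightarrow> nat)) \<Rightarrow> ('k \<Rightarrow> nat) list \<Rightarrow> 'p set \<Rightarrow> bool"
  where "F_harmonic P r s d F C \<longleftrightarrow> nontrivial_component P r s d C \<and>
    (vclosure P r s d C - C = {} \<or>
     spec_rad C (AF P r s d F) > spec_rad (vclosure P r s d C - C) (AF P r s d F))"

definition PF_vector :: "'p set \<Rightarrow> ('p \<Rightarrow> 'p \<Rightarrow> real) \<Rightarrow> ('p \<Rightarrow> real) \<Rightarrow> bool"
  where "PF_vector C B x \<longleftrightarrow> (\<forall>v\<in>C. x v > 0) \<and> (\<Sum>v\<in>C. x v) = 1 \<and>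
    (\<forall>v\<in>C. (\<Sum>w\<in>C. B v w * x w) = spec_rad C B * x v)"

end

theory Submission
  imports Defs "Jordan_Normal_Form.Spectral_Radius"
begin

text \<open>On the component \<open>C\<close> the matrix \<open>A\<^sub>F\<close> is positive, so by Perron--Frobenius it has a positive
  eigenvector \<open>x\<close> for \<open>\<rho> = \<rho>(A\<^sub>F\<^sup>C)\<close>, unique up to scaling among nonnegative eigenvectors. No path
  leads from \<open>C\<close> into the rest \<open>D\<close> of its closure, nor from outside the closure into it; so an
  eigenvector supported on the closure is a multiple of \<open>x\<close> on \<open>C\<close> and on \<open>D\<close> solves
  \<open>\<rho> y = A\<^sub>F(D, C) x + A\<^sub>F(D, D) y\<close>. Harmonicity, \<open>\<rho>(A\<^sub>F\<^sup>D) < \<rho>\<close>, makes this system uniquely solvable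
  with a nonnegative solution, which is positive because every vertex of \<open>D\<close> reaches \<open>C\<close>.\<close>

section \<open>Functions on finite sets as JNF matrices\<close>

definition set_enum :: "'a set \<Rightarrow> nat \<Rightarrow> 'a" where
  "set_enum S = (SOME e. bij_betw e {0..<card S} S)"

definition set_index :: "'a set \<Rightarrow> 'a \<Rightarrow> nat" where
  "set_index S = inv_into {0..<card S} (set_enum S)"

lemma bij_betw_set_enum: "finite S \<Longrightarrow> bij_betw (set_enum S) {0..<card S} S"
  unfolding set_enum_def using someI_ex[OF ex_bij_betw_nat_finite] .

lemma set_enum_in: "finite S \<Longrightarrow> i < card S \<Longrightarrow> set_enum S i \<in> S"
  using bij_betw_set_enum bij_betwE by fastforce

lemma set_index_less: "finite S \<Longrightarrow> p \<in> S \<Longrightarrow> set_index S p < card S"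
  unfolding set_index_def
  by (metis atLeastLessThan_iff bij_betw_def bij_betw_set_enum inv_into_into)

lemma set_enum_index: "finite S \<Longrightarrow> p \<in> S \<Longrightarrow> set_enum S (set_index S p) = p"
  unfolding set_index_def by (meson bij_betw_inv_into_right bij_betw_set_enum)

lemma set_index_enum: "finite S \<Longrightarrow> i < card S \<Longrightarrow> set_index S (set_enum S i) = i"
  unfolding set_index_def
  by (simp add: bij_betw_imp_inj_on[OF bij_betw_set_enum] inv_into_f_f)

definition mat_on :: "'a set \<Rightarrow> ('a \<Rightarrow> 'a \<Rightarrow> 'b) \<Rightarrow> 'b mat" where
  "mat_on S B = mat (card S) (card S) (\<lambda>(i, j). B (set_enum S i) (set_enum S j))"

definition vec_on :: "'a set \<Rightarrow> ('a \<Rightarrow> 'b) \<Rightarrow> 'b vec" where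
  "vec_on S x = vec (card S) (\<lambda>i. x (set_enum S i))"

definition fun_on :: "'a set \<Rightarrow> 'b vec \<Rightarrow> 'a \<Rightarrow> 'b" where
  "fun_on S v p = v $ set_index S p"

lemma mat_on_carrier [simp]: "mat_on S B \<in> carrier_mat (card S) (card S)"
  and dim_mat_on [simp]: "dim_row (mat_on S B) = card S" "dim_col (mat_on S B) = card S"
  by (simp_all add: mat_on_def)

lemma vec_on_carrier [simp]: "vec_on S x \<in> carrier_vec (card S)"
  by (simp add: vec_on_def)

lemma mult_mat_on_vec_on:
  assumes "finite S" and "i < card S"
  shows "(mat_on S B *\<^sub>v vec_on S x) $ i = (\<Sum>w\<in>S. B (set_enum S i) w * x w)"
proof -
  have "(mat_on S B *\<^sub>v vec_on S x) $ i
      = (\<Sum>j = 0..<card S. B (set_enum S i) (set_enum S j) * x (set_enum S j))"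
    using assms(2) by (simp add: mat_on_def vec_on_def scalar_prod_def)
  also have "\<dots> = (\<Sum>w\<in>S. B (set_enum S i) w * x w)"
    by (rule sum.reindex_bij_betw[OF bij_betw_set_enum[OF assms(1)]])
  finally show ?thesis .
qed

lemma vec_on_fun_on: "finite S \<Longrightarrow> v \<in> carrier_vec (card S) \<Longrightarrow> vec_on S (fun_on S v) = v"
  by (intro eq_vecI) (auto simp: vec_on_def fun_on_def set_index_enum)

lemma sum_fun_on_eq_mult_mat_vec:
  assumes "finite S" and "v \<in> carrier_vec (card S)" and "p \<in> S"
  shows "(\<Sum>w\<in>S. B p w * fun_on S v w) = (mat_on S B *\<^sub>v v) $ set_index S p"
  using mult_mat_on_vec_on[OF assms(1) set_index_less[OF assms(1,3)], of B "fun_on S v"]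
  by (simp add: set_enum_index assms vec_on_fun_on)

lemma fun_on_nonzero:
  assumes "finite S" and "v \<in> carrier_vec (card S)" and "v \<noteq> 0\<^sub>v (card S)"
  shows "\<exists>p\<in>S. fun_on S v p \<noteq> 0"
proof -
  obtain i where "i < card S" "v $ i \<noteq> 0"
    using assms(2,3) by (metis carrier_vecD eq_vecI index_zero_vec)
  thus ?thesis
    by (intro bexI[of _ "set_enum S i"]) (auto simp: fun_on_def set_index_enum set_enum_in assms(1))
qed

lemma injective_imp_solvable_on:
  fixes N :: "'a \<Rightarrow> 'a \<Rightarrow> real"
  assumes fin: "finite S"
    and inj: "\<And>y. \<forall>v\<in>S. (\<Sum>w\<in>S. N v w * y w) = 0 \<Longrightarrow> \<forall>v\<in>S. y v = 0"
  obtains y where "\<forall>v\<in>S. (\<Sum>w\<in>S. N v w * y w) = b v"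
proof -
  let ?M = "mat_on S N"
  have det: "det ?M \<noteq> 0"
  proof
    assume "det ?M = 0"
    then obtain v where v: "v \<in> carrier_vec (card S)" "v \<noteq> 0\<^sub>v (card S)" "?M *\<^sub>v v = 0\<^sub>v (card S)"
      using det_0_iff_vec_prod_zero_field[OF mat_on_carrier] by blast
    have "(\<Sum>w\<in>S. N p w * fun_on S v w) = 0" if "p \<in> S" for p
      unfolding sum_fun_on_eq_mult_mat_vec[OF fin v(1) that] v(3)
      using set_index_less[OF fin that] by simp
    with inj[of "fun_on S v"] fun_on_nonzero[OF fin v(1,2)] show False by blast
  qed
  then obtain M' where M': "M' \<in> carrier_mat (card S) (card S)" "?M * M' = 1\<^sub>m (card S)"
    using det_non_zero_imp_unit[OF mat_on_carrier det, of "()"] unfolding Units_def ring_mat_def by auto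
  define y where "y = fun_on S (M' *\<^sub>v vec_on S b)"
  have My: "?M *\<^sub>v vec_on S y = vec_on S b"
    using M' by (simp add: y_def vec_on_fun_on[OF fin] assoc_mult_mat_vec[symmetric, of _ "card S" "card S" _ "card S"])
  have "(\<Sum>w\<in>S. N p w * y w) = b p" if p: "p \<in> S" for p
  proof -
    have "(\<Sum>w\<in>S. N p w * y w) = (?M *\<^sub>v vec_on S y) $ set_index S p"
      using mult_mat_on_vec_on[OF fin set_index_less[OF fin p], of N y, symmetric]
      unfolding set_enum_index[OF fin p] .
    also have "\<dots> = b p"
      unfolding My using set_index_less[OF fin p] by (simp add: vec_on_def set_enum_index[OF fin p])
    finally show ?thesis .
  qed
  thus ?thesis using that by blast
qed

section \<open>Spectral radius of a restricted matrix\<close>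

definition eigenpair_on :: "'a set \<Rightarrow> ('a \<Rightarrow> 'a \<Rightarrow> real) \<Rightarrow> complex \<Rightarrow> ('a \<Rightarrow> complex) \<Rightarrow> bool" where
  "eigenpair_on S B u x \<longleftrightarrow> (\<exists>v\<in>S. x v \<noteq> 0) \<and>
     (\<forall>v\<in>S. (\<Sum>w\<in>S. complex_of_real (B v w) * x w) = u * x v)"

abbreviation cmat_on :: "'a set \<Rightarrow> ('a \<Rightarrow> 'a \<Rightarrow> real) \<Rightarrow> complex mat" where
  "cmat_on S B \<equiv> mat_on S (\<lambda>v w. complex_of_real (B v w))"

lemma eigenvalue_cmat_on_iff:
  assumes "finite S"
  shows "eigenvalue (cmat_on S B) u \<longleftrightarrow> (\<exists>x. eigenpair_on S B u x)"
proof
  assume "eigenvalue (cmat_on S B) u"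
  then obtain v where v: "v \<in> carrier_vec (card S)" "v \<noteq> 0\<^sub>v (card S)"
      "cmat_on S B *\<^sub>v v = u \<cdot>\<^sub>v v"
    unfolding eigenvalue_def eigenvector_def by auto
  have "(\<Sum>w\<in>S. complex_of_real (B p w) * fun_on S v w) = u * fun_on S v p" if "p \<in> S" for p
  proof -
    have "(\<Sum>w\<in>S. complex_of_real (B p w) * fun_on S v w) = (cmat_on S B *\<^sub>v v) $ set_index S p"
      by (rule sum_fun_on_eq_mult_mat_vec[OF assms v(1) that])
    also have "\<dots> = u * fun_on S v p"
      using v(1,3) set_index_less[OF assms that] by (simp add: fun_on_def)
    finally show ?thesis .
  qed
  with fun_on_nonzero[OF assms v(1,2)] show "\<exists>x. eigenpair_on S B u x"
    unfolding eigenpair_on_def by blast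
next
  assume "\<exists>x. eigenpair_on S B u x"
  then obtain x v0 where v0: "v0 \<in> S" "x v0 \<noteq> 0"
    and eq: "\<forall>v\<in>S. (\<Sum>w\<in>S. complex_of_real (B v w) * x w) = u * x v"
    unfolding eigenpair_on_def by blast
  have "vec_on S x $ set_index S v0 \<noteq> 0"
    using v0 set_index_less[OF assms v0(1)] by (simp add: vec_on_def set_enum_index assms)
  hence "vec_on S x \<noteq> 0\<^sub>v (card S)"
    using set_index_less[OF assms v0(1)] by auto
  moreover have "cmat_on S B *\<^sub>v vec_on S x = u \<cdot>\<^sub>v vec_on S x"
  proof (rule eq_vecI)
    fix i assume "i < dim_vec (u \<cdot>\<^sub>v vec_on S x)"
    hence i: "i < card S" by (simp add: vec_on_def)
    show "(cmat_on S B *\<^sub>v vec_on S x) $ i = (u \<cdot>\<^sub>v vec_on S x) $ i"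
      unfolding mult_mat_on_vec_on[OF assms i] using eq set_enum_in[OF assms i] i
      by (simp add: vec_on_def)
  qed (simp add: vec_on_def)
  ultimately show "eigenvalue (cmat_on S B) u"
    unfolding eigenvalue_def eigenvector_def by (intro exI[of _ "vec_on S x"]) simp
qed

lemma spectrum_cmat_on:
  "finite S \<Longrightarrow> spectrum (cmat_on S B) = {u. \<exists>x. eigenpair_on S B u x}"
  by (auto simp: spectrum_def eigenvalue_cmat_on_iff)

lemma spec_rad_eq_spectral_radius: "finite S \<Longrightarrow> spec_rad S B = spectral_radius (cmat_on S B)"
  unfolding spec_rad_def spectral_radius_def spectrum_cmat_on eigenpair_on_def
  by (intro arg_cong[where f = Max]) blast

lemma eigenpair_on_norm_le_spec_rad:
  assumes "finite S" and "eigenpair_on S B u x"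
  shows "cmod u \<le> spec_rad S B"
proof -
  have "card S > 0"
    using assms card_gt_0_iff unfolding eigenpair_on_def by blast
  moreover have "cmod u \<in> norm ` spectrum (cmat_on S B)"
    using assms by (auto simp: spectrum_cmat_on)
  ultimately show ?thesis
    unfolding spec_rad_eq_spectral_radius[OF assms(1)]
    by (rule spectral_radius_mem_max(2)[OF mat_on_carrier])
qed

lemma spec_rad_attained:
  assumes "finite S" and "S \<noteq> {}"
  obtains u x where "eigenpair_on S B u x" and "spec_rad S B = cmod u"
proof -
  have "spec_rad S B \<in> norm ` spectrum (cmat_on S B)"
    unfolding spec_rad_eq_spectral_radius[OF assms(1)]
    by (rule spectral_radius_mem_max(1)[OF mat_on_carrier]) (use assms in auto)
  thus ?thesis
    using that by (auto simp: spectrum_cmat_on[OF assms(1)])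
qed

lemma spec_rad_nonneg:
  assumes "finite S" and "S \<noteq> {}"
  shows "0 \<le> spec_rad S B"
proof -
  obtain u x where "spec_rad S B = cmod u"
    using spec_rad_attained[OF assms] .
  thus ?thesis by simp
qed

lemma real_eigenvalue_abs_le_spec_rad:
  assumes "finite S" and "\<exists>v\<in>S. y v \<noteq> 0" and "\<forall>v\<in>S. (\<Sum>w\<in>S. B v w * y w) = l * y v"
  shows "\<bar>l\<bar> \<le> spec_rad S B"
proof -
  have "(\<Sum>w\<in>S. complex_of_real (B v w) * complex_of_real (y w))
      = complex_of_real l * complex_of_real (y v)" if "v \<in> S" for v
    using assms(3) that by (simp flip: of_real_mult of_real_sum)
  hence "eigenpair_on S B (complex_of_real l) (\<lambda>v. complex_of_real (y v))"
    using assms(2) unfolding eigenpair_on_def by simp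
  from eigenpair_on_norm_le_spec_rad[OF assms(1) this] show ?thesis by simp
qed

lemma spec_rad_divide_le:
  assumes "finite S" and "S \<noteq> {}" and "m > 0"
  shows "spec_rad S (\<lambda>v w. B v w / m) \<le> spec_rad S B / m"
proof -
  obtain u x where ux: "eigenpair_on S (\<lambda>v w. B v w / m) u x"
    and eq: "spec_rad S (\<lambda>v w. B v w / m) = cmod u"
    using spec_rad_attained[OF assms(1,2)] .
  have "(\<Sum>w\<in>S. complex_of_real (B v w) * x w) = complex_of_real m * u * x v" if "v \<in> S" for v
  proof -
    have "(\<Sum>w\<in>S. complex_of_real (B v w) * x w)
        = complex_of_real m * (\<Sum>w\<in>S. complex_of_real (B v w / m) * x w)"
      using assms(3) by (simp add: sum_distrib_left of_real_divide)
    thus ?thesis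
      using ux that unfolding eigenpair_on_def by simp
  qed
  hence "eigenpair_on S B (complex_of_real m * u) x"
    using ux unfolding eigenpair_on_def by blast
  from eigenpair_on_norm_le_spec_rad[OF assms(1) this] show ?thesis
    using eq assms(3) by (simp add: norm_mult pos_le_divide_eq mult.commute)
qed

section \<open>Nonnegative matrices\<close>

fun mat_pow_on :: "'a set \<Rightarrow> ('a \<Rightarrow> 'a \<Rightarrow> real) \<Rightarrow> nat \<Rightarrow> 'a \<Rightarrow> 'a \<Rightarrow> real" where
  "mat_pow_on S B 0 v w = (if v = w then 1 else 0)"
| "mat_pow_on S B (Suc k) v w = (\<Sum>u\<in>S. mat_pow_on S B k v u * B u w)"

lemma cmat_on_power:
  assumes "finite S" and "i < card S" and "j < card S"
  shows "(cmat_on S B ^\<^sub>m k) $$ (i, j) = complex_of_real (mat_pow_on S B k (set_enum S i) (set_enum S j))"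
  using assms(3)
proof (induction k arbitrary: j)
  case 0
  have "(set_enum S i = set_enum S j) = (i = j)"
    by (metis "0" assms(1,2) set_index_enum)
  thus ?case using assms(2) "0" by (simp add: mat_on_def)
next
  case (Suc k)
  have "(cmat_on S B ^\<^sub>m Suc k) $$ (i, j)
      = (\<Sum>l = 0..<card S. (cmat_on S B ^\<^sub>m k) $$ (i, l) * cmat_on S B $$ (l, j))"
    using assms(2) Suc.prems by (simp add: scalar_prod_def)
  also have "\<dots> = (\<Sum>l = 0..<card S. complex_of_real
      (mat_pow_on S B k (set_enum S i) (set_enum S l) * B (set_enum S l) (set_enum S j)))"
    using Suc.IH Suc.prems by (intro sum.cong) (auto simp: mat_on_def)
  also have "\<dots> = (\<Sum>u\<in>S. complex_of_real (mat_pow_on S B k (set_enum S i) u * B u (set_enum S j)))"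
    by (rule sum.reindex_bij_betw[OF bij_betw_set_enum[OF assms(1)]])
  finally show ?case by simp
qed

lemma mat_pow_on_nonneg:
  assumes "\<forall>v\<in>S. \<forall>w\<in>S. 0 \<le> B v w" and "w \<in> S"
  shows "0 \<le> mat_pow_on S B k v w"
  using assms(2) by (induction k arbitrary: w) (auto intro!: sum_nonneg simp: assms(1))

lemma mat_pow_on_bounded:
  assumes "finite S" and "spec_rad S B < 1"
  obtains c where "\<And>k v w. v \<in> S \<Longrightarrow> w \<in> S \<Longrightarrow> \<bar>mat_pow_on S B k v w\<bar> \<le> c"
proof -
  have "spectral_radius (cmat_on S B) < 1"
    using assms by (simp add: spec_rad_eq_spectral_radius)
  then obtain c where c: "\<And>k. norm_bound (cmat_on S B ^\<^sub>m k) c"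
    using spectral_radius_jnf_norm_bound_less_1_upper_triangular[OF mat_on_carrier] by blast
  have "\<bar>mat_pow_on S B k v w\<bar> \<le> c" if "v \<in> S" "w \<in> S" for k v w
  proof -
    let ?i = "set_index S v" and ?j = "set_index S w"
    have "norm ((cmat_on S B ^\<^sub>m k) $$ (?i, ?j)) \<le> c"
      using c[of k] pow_carrier_mat[OF mat_on_carrier] set_index_less[OF assms(1)] that
      unfolding norm_bound_def by fastforce
    thus ?thesis
      using that by (simp add: cmat_on_power set_index_less set_enum_index assms(1))
  qed
  thus ?thesis using that by blast
qed

lemma mat_pow_on_subinvariant:
  assumes "finite S" and "\<forall>v\<in>S. \<forall>w\<in>S. 0 \<le> B v w" and "0 \<le> m"
    and "\<forall>v\<in>S. m * u v \<le> (\<Sum>w\<in>S. B v w * u w)" and "v \<in> S"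
  shows "m ^ k * u v \<le> (\<Sum>w\<in>S. mat_pow_on S B k v w * u w)"
proof (induction k)
  case 0
  have "(\<Sum>w\<in>S. mat_pow_on S B 0 v w * u w) = (\<Sum>w\<in>S. if v = w then u w else 0)"
    by (intro sum.cong) auto
  thus ?case using assms(1,5) by simp
next
  case (Suc k)
  have "m ^ Suc k * u v = m * (m ^ k * u v)"
    by simp
  also have "\<dots> \<le> m * (\<Sum>x\<in>S. mat_pow_on S B k v x * u x)"
    using Suc.IH assms(3) by (rule mult_left_mono)
  also have "\<dots> = (\<Sum>x\<in>S. mat_pow_on S B k v x * (m * u x))"
    by (simp add: sum_distrib_left algebra_simps)
  also have "\<dots> \<le> (\<Sum>x\<in>S. mat_pow_on S B k v x * (\<Sum>w\<in>S. B x w * u w))"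
    using assms(4) mat_pow_on_nonneg[OF assms(2)] by (intro sum_mono mult_left_mono) auto
  also have "\<dots> = (\<Sum>x\<in>S. \<Sum>w\<in>S. mat_pow_on S B k v x * B x w * u w)"
    by (simp add: sum_distrib_left mult.assoc)
  also have "\<dots> = (\<Sum>w\<in>S. mat_pow_on S B (Suc k) v w * u w)"
    by (subst sum.swap) (simp add: sum_distrib_right)
  finally show ?case .
qed

text \<open>Otherwise the powers of \<open>B/m\<close>, for \<open>\<rho>(B) < m < \<mu>\<close>, would stay bounded while
  \<open>(\<mu>/m)^k u\<close> grows.\<close>

lemma subinvariant_le_spec_rad:
  assumes fin: "finite S" and B: "\<forall>v\<in>S. \<forall>w\<in>S. 0 \<le> B v w"
    and u: "\<forall>v\<in>S. 0 \<le> u v" and v0: "v0 \<in> S" "0 < u v0"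
    and sub: "\<forall>v\<in>S. \<mu> * u v \<le> (\<Sum>w\<in>S. B v w * u w)" and "0 < \<mu>"
  shows "\<mu> \<le> spec_rad S B"
proof (rule ccontr)
  assume "\<not> \<mu> \<le> spec_rad S B"
  moreover have "0 \<le> spec_rad S B"
    using spec_rad_nonneg fin v0(1) by blast
  ultimately obtain m where m: "0 < m" "spec_rad S B < m" "m < \<mu>"
    using dense by (metis not_le order.strict_trans1)
  define B' where "B' = (\<lambda>v w. B v w / m)"
  have "spec_rad S B' \<le> spec_rad S B / m"
    unfolding B'_def using spec_rad_divide_le fin v0(1) m(1) by blast
  also have "\<dots> < 1" using m by simp
  finally obtain c where c: "\<And>k w. w \<in> S \<Longrightarrow> \<bar>mat_pow_on S B' k v0 w\<bar> \<le> c"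
    using mat_pow_on_bounded[OF fin] v0(1) by metis
  have B': "\<forall>v\<in>S. \<forall>w\<in>S. 0 \<le> B' v w"
    using B m(1) by (simp add: B'_def)
  have sub': "\<forall>v\<in>S. \<mu> / m * u v \<le> (\<Sum>w\<in>S. B' v w * u w)"
    using sub m(1) by (simp add: B'_def sum_divide_distrib[symmetric] divide_right_mono)
  have "(\<mu> / m) ^ k * u v0 \<le> c * (\<Sum>w\<in>S. u w)" for k
  proof -
    have "(\<mu> / m) ^ k * u v0 \<le> (\<Sum>w\<in>S. mat_pow_on S B' k v0 w * u w)"
      using mat_pow_on_subinvariant[OF fin B' _ sub' v0(1)] \<open>0 < \<mu>\<close> m(1) by simp
    also have "\<dots> \<le> (\<Sum>w\<in>S. c * u w)"
      using c u by (intro sum_mono) (metis abs_ge_self mult_right_mono order_trans)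
    finally show ?thesis by (simp add: sum_distrib_left)
  qed
  moreover obtain k where "c * (\<Sum>w\<in>S. u w) / u v0 < (\<mu> / m) ^ k"
    using real_arch_pow[of "\<mu> / m"] m by auto
  ultimately show False
    using v0(2) by (metis divide_less_eq not_le)
qed

section \<open>Positive matrices\<close>

lemma positive_subinvariant_is_eigenvector:
  assumes fin: "finite S" and pos: "\<forall>v\<in>S. \<forall>w\<in>S. 0 < B v w"
    and y: "\<forall>v\<in>S. 0 \<le> y v" and v1: "v1 \<in> S" "0 < y v1"
    and sub: "\<forall>v\<in>S. spec_rad S B * y v \<le> (\<Sum>w\<in>S. B v w * y w)"
  shows "\<forall>v\<in>S. (\<Sum>w\<in>S. B v w * y w) = spec_rad S B * y v"
proof (rule ccontr)
  let ?\<rho> = "spec_rad S B"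
  have Bnn: "\<forall>v\<in>S. \<forall>w\<in>S. 0 \<le> B v w"
    using pos by (auto simp: less_imp_le)
  define u where "u v = (\<Sum>w\<in>S. B v w * y w)" for v
  assume "\<not> (\<forall>v\<in>S. (\<Sum>w\<in>S. B v w * y w) = ?\<rho> * y v)"
  then obtain v0 where v0: "v0 \<in> S" "?\<rho> * y v0 < u v0"
    using sub unfolding u_def by force
  have u: "0 < u v" if "v \<in> S" for v
    unfolding u_def using pos Bnn y v1 that by (intro sum_pos2[OF fin v1(1)]) auto
  have gap: "?\<rho> * u v < (\<Sum>w\<in>S. B v w * u w)" if v: "v \<in> S" for v
  proof -
    have "0 < (\<Sum>w\<in>S. B v w * (u w - ?\<rho> * y w))"
      using pos Bnn sub v v0 by (intro sum_pos2[OF fin v0(1)]) (auto simp: u_def)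
    also have "\<dots> = (\<Sum>w\<in>S. B v w * u w) - ?\<rho> * u v"
      by (simp add: u_def right_diff_distrib sum_subtractf sum_distrib_left algebra_simps)
    finally show ?thesis by simp
  qed
  define \<mu> where "\<mu> = Min ((\<lambda>v. (\<Sum>w\<in>S. B v w * u w) / u v) ` S)"
  have "?\<rho> < \<mu>"
    unfolding \<mu>_def using fin v0(1) gap u by (subst Min_gr_iff) (auto simp: pos_less_divide_eq)
  moreover have "\<mu> \<le> ?\<rho>"
  proof (rule subinvariant_le_spec_rad[where u = u, OF fin Bnn _ v0(1) u[OF v0(1)]])
    show "\<forall>v\<in>S. 0 \<le> u v" using u by (simp add: less_imp_le)
    show "\<forall>v\<in>S. \<mu> * u v \<le> (\<Sum>w\<in>S. B v w * u w)"
    proof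
      fix v assume v: "v \<in> S"
      have "\<mu> \<le> (\<Sum>w\<in>S. B v w * u w) / u v"
        unfolding \<mu>_def using fin v by (intro Min_le) auto
      thus "\<mu> * u v \<le> (\<Sum>w\<in>S. B v w * u w)"
        using u[OF v] by (simp add: pos_le_divide_eq)
    qed
    show "0 < \<mu>"
      using spec_rad_nonneg[OF fin, of B] v0(1) \<open>?\<rho> < \<mu>\<close> by (metis empty_iff le_less_trans)
  qed
  ultimately show False by simp
qed

text \<open>The moduli of an eigenvector for an eigenvalue of maximal modulus form a subinvariant vector,
  which by the previous lemma is a positive eigenvector for the spectral radius.\<close>

lemma perron_frobenius_positive:
  assumes fin: "finite S" and ne: "S \<noteq> {}" and pos: "\<forall>v\<in>S. \<forall>w\<in>S. 0 < B v w"
  shows "0 < spec_rad S B" and "\<exists>x. PF_vector S B x"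
proof -
  let ?\<rho> = "spec_rad S B"
  obtain l z where z: "eigenpair_on S B l z" and l: "?\<rho> = cmod l"
    using spec_rad_attained[OF fin ne] .
  then obtain v1 where v1: "v1 \<in> S" "0 < cmod (z v1)"
    unfolding eigenpair_on_def by auto
  have "?\<rho> * cmod (z v) \<le> (\<Sum>w\<in>S. B v w * cmod (z w))" if v: "v \<in> S" for v
  proof -
    have "?\<rho> * cmod (z v) = cmod (\<Sum>w\<in>S. complex_of_real (B v w) * z w)"
      using z v l unfolding eigenpair_on_def by (simp add: norm_mult)
    also have "\<dots> \<le> (\<Sum>w\<in>S. cmod (complex_of_real (B v w) * z w))"
      by (rule norm_sum)
    also have "\<dots> = (\<Sum>w\<in>S. B v w * cmod (z w))"
      using pos v by (intro sum.cong) (auto simp: norm_mult less_imp_le)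
    finally show ?thesis .
  qed
  hence eig: "\<forall>v\<in>S. (\<Sum>w\<in>S. B v w * cmod (z w)) = ?\<rho> * cmod (z v)"
    by (intro positive_subinvariant_is_eigenvector[where y = "\<lambda>v. cmod (z v)", OF fin pos _ v1]) auto
  have rho_y: "0 < ?\<rho> * cmod (z v)" if "v \<in> S" for v
  proof -
    have "0 < (\<Sum>w\<in>S. B v w * cmod (z w))"
      using pos that v1 by (intro sum_pos2[OF fin v1(1)]) (auto simp: less_imp_le)
    thus ?thesis using eig that by simp
  qed
  show "0 < ?\<rho>"
    using rho_y[OF v1(1)] v1(2) by (simp add: zero_less_mult_iff)
  hence y: "0 < cmod (z v)" if "v \<in> S" for v
    using rho_y[OF that] by (simp add: zero_less_mult_iff)
  define Y where "Y = (\<Sum>v\<in>S. cmod (z v))"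
  have "0 < Y"
    unfolding Y_def using y fin ne by (intro sum_pos) auto
  hence "PF_vector S B (\<lambda>v. cmod (z v) / Y)"
    unfolding PF_vector_def using y eig
    by (simp add: Y_def sum_divide_distrib[symmetric] mult.left_commute[of _ _ "inverse _"] divide_inverse
        sum_distrib_right[symmetric] mult.assoc[symmetric])
  thus "\<exists>x. PF_vector S B x" by blast
qed

lemma nonneg_eigenvector_proportional:
  fixes B :: "'a \<Rightarrow> 'a \<Rightarrow> real"
  assumes fin: "finite S" and ne: "S \<noteq> {}" and pos: "\<forall>v\<in>S. \<forall>w\<in>S. 0 < B v w"
    and x: "\<forall>v\<in>S. 0 < x v" "\<forall>v\<in>S. (\<Sum>w\<in>S. B v w * x w) = l * x v"
    and y: "\<forall>v\<in>S. 0 \<le> y v" "\<forall>v\<in>S. (\<Sum>w\<in>S. B v w * y w) = l * y v"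
  shows "\<exists>t\<ge>0. \<forall>v\<in>S. y v = t * x v"
proof -
  define t where "t = Min ((\<lambda>v. y v / x v) ` S)"
  have "t \<in> (\<lambda>v. y v / x v) ` S"
    unfolding t_def using fin ne by (intro Min_in) auto
  then obtain v0 where v0: "v0 \<in> S" "t = y v0 / x v0"
    by blast
  define z where "z v = y v - t * x v" for v
  have z: "0 \<le> z v" if "v \<in> S" for v
  proof -
    have "t \<le> y v / x v"
      unfolding t_def using fin that by (intro Min_le) auto
    thus ?thesis
      unfolding z_def using x(1) that by (simp add: pos_le_divide_eq)
  qed
  have "(\<Sum>w\<in>S. B v0 w * z w) = (\<Sum>w\<in>S. B v0 w * y w) - t * (\<Sum>w\<in>S. B v0 w * x w)"
    by (simp add: z_def right_diff_distrib sum_subtractf sum_distrib_left mult.left_commute)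
  also have "\<dots> = l * z v0"
    using x(2) y(2) v0(1) by (simp add: z_def algebra_simps)
  also have "z v0 = 0"
    unfolding z_def using v0 x(1) by fastforce
  finally have "(\<Sum>w\<in>S. B v0 w * z w) = 0"
    by simp
  moreover have "0 \<le> B v0 w * z w" if "w \<in> S" for w
    using z pos v0(1) that by (meson less_imp_le mult_nonneg_nonneg)
  ultimately have "\<forall>w\<in>S. B v0 w * z w = 0"
    by (simp add: sum_nonneg_eq_0_iff[OF fin])
  hence "\<forall>w\<in>S. z w = 0"
    using pos v0(1) by (metis less_irrefl mult_eq_0_iff)
  moreover have "0 \<le> t"
    using v0 y(1) x(1) by (simp add: less_imp_le)
  ultimately show ?thesis
    unfolding z_def by (intro exI[of _ t]) auto
qed

section \<open>A dominant component and its closure\<close>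

text \<open>The matrix \<open>A\<close> stands for \<open>A\<^sub>F\<close> on the vertex set \<open>V\<close>, \<open>C\<close> for an \<open>F\<close>-harmonic component and
  \<open>Cbar\<close> for its closure.\<close>

locale harmonic_component =
  fixes V C Cbar :: "'a set" and A :: "'a \<Rightarrow> 'a \<Rightarrow> real"
  assumes finite_V: "finite V"
    and C_nonempty: "C \<noteq> {}"
    and C_subset: "C \<subseteq> Cbar"
    and Cbar_subset: "Cbar \<subseteq> V"
    and A_nonneg: "0 \<le> A v w"
    and A_pos_on_C: "v \<in> C \<Longrightarrow> w \<in> C \<Longrightarrow> 0 < A v w"
    and A_C_rest: "v \<in> C \<Longrightarrow> w \<in> Cbar - C \<Longrightarrow> A v w = 0"
    and A_outside_Cbar: "v \<in> V \<Longrightarrow> v \<notin> Cbar \<Longrightarrow> w \<in> Cbar \<Longrightarrow> A v w = 0"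
    and rest_reaches_C: "v \<in> Cbar - C \<Longrightarrow> \<exists>w\<in>C. 0 < A v w"
    and rest_dominated: "Cbar - C \<noteq> {} \<Longrightarrow> spec_rad (Cbar - C) A < spec_rad C A"
begin

abbreviation rest :: "'a set" where
  "rest \<equiv> Cbar - C"

abbreviation rho :: real where
  "rho \<equiv> spec_rad C A"

definition closure_eigvec :: "('a \<Rightarrow> real) \<Rightarrow> bool" where
  "closure_eigvec y \<longleftrightarrow> (\<forall>v\<in>V. 0 \<le> y v) \<and> (\<forall>v. v \<notin> Cbar \<longrightarrow> y v = 0) \<and>
     (\<forall>v\<in>V. (\<Sum>w\<in>V. A v w * y w) = rho * y v)"

definition normalized_closure_eigvec :: "('a \<Rightarrow> real) \<Rightarrow> bool" where
  "normalized_closure_eigvec y \<longleftrightarrow> (\<forall>v\<in>V. 0 \<le> y v) \<and> (\<forall>v. v \<notin> V \<longrightarrow> y v = 0) \<and> sum y V = 1 \<and>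
     (\<forall>v\<in>V. (\<Sum>w\<in>V. A v w * y w) = rho * y v) \<and> (\<forall>v\<in>V. v \<notin> Cbar \<longrightarrow> y v = 0)"

lemma normalized_closure_eigvec_iff:
  "normalized_closure_eigvec y \<longleftrightarrow> closure_eigvec y \<and> sum y V = 1"
  using Cbar_subset unfolding normalized_closure_eigvec_def closure_eigvec_def by blast

lemma finite_C: "finite C"
  using finite_V C_subset Cbar_subset by (meson finite_subset subset_trans)

lemma finite_rest: "finite rest"
  using finite_V Cbar_subset by (meson Diff_subset finite_subset subset_trans)

lemma rho_pos: "0 < rho"
  using perron_frobenius_positive(1)[OF finite_C C_nonempty] A_pos_on_C by blast

lemma ex_PF_vector: "\<exists>x. PF_vector C A x"
  using perron_frobenius_positive(2)[OF finite_C C_nonempty] A_pos_on_C by blast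

lemma rest_eigenvector_zero:
  assumes "\<forall>v\<in>rest. (\<Sum>w\<in>rest. A v w * y w) = rho * y v"
  shows "\<forall>v\<in>rest. y v = 0"
proof (rule ccontr)
  assume "\<not> (\<forall>v\<in>rest. y v = 0)"
  hence "\<exists>v\<in>rest. y v \<noteq> 0" by blast
  hence "\<bar>rho\<bar> \<le> spec_rad rest A" and "rest \<noteq> {}"
    using real_eigenvalue_abs_le_spec_rad[OF finite_rest _ assms] by blast+
  thus False using rest_dominated by simp
qed

lemma rest_subinvariant_zero:
  assumes "\<forall>v\<in>rest. 0 \<le> u v" and "\<forall>v\<in>rest. rho * u v \<le> (\<Sum>w\<in>rest. A v w * u w)"
  shows "\<forall>v\<in>rest. u v = 0"
proof (rule ccontr)
  assume "\<not> (\<forall>v\<in>rest. u v = 0)"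
  then obtain v0 where v0: "v0 \<in> rest" "0 < u v0"
    using assms(1) by force
  have "rho \<le> spec_rad rest A"
    using subinvariant_le_spec_rad[OF finite_rest _ assms(1) v0 assms(2) rho_pos] A_nonneg by blast
  thus False using rest_dominated v0(1) by fastforce
qed

lemma rest_equation_solvable:
  obtains y where "\<forall>v\<in>rest. rho * y v = b v + (\<Sum>w\<in>rest. A v w * y w)"
proof -
  define N where "N v w = (if v = w then rho else 0) - A v w" for v w
  have N: "(\<Sum>w\<in>rest. N v w * y w) = rho * y v - (\<Sum>w\<in>rest. A v w * y w)"
    if "v \<in> rest" for v y
    using finite_rest that
    by (simp add: N_def left_diff_distrib sum_subtractf if_distrib[of "\<lambda>t. t * _"] sum.delta cong: if_cong)
  obtain y where "\<forall>v\<in>rest. (\<Sum>w\<in>rest. N v w * y w) = b v"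
  proof (rule injective_imp_solvable_on[OF finite_rest])
    fix y assume "\<forall>v\<in>rest. (\<Sum>w\<in>rest. N v w * y w) = 0"
    hence "\<forall>v\<in>rest. (\<Sum>w\<in>rest. A v w * y w) = rho * y v"
      using N by simp
    thus "\<forall>v\<in>rest. y v = 0"
      by (rule rest_eigenvector_zero)
  qed
  hence "rho * y v = b v + (\<Sum>w\<in>rest. A v w * y w)" if "v \<in> rest" for v
    using N[OF that, of y] that by simp
  thus ?thesis using that by blast
qed

text \<open>Negative parts of a solution with nonnegative data are subinvariant, hence vanish.\<close>

lemma rest_equation_nonneg:
  assumes "\<forall>v\<in>rest. 0 \<le> b v" and "\<forall>v\<in>rest. rho * y v = b v + (\<Sum>w\<in>rest. A v w * y w)"
  shows "\<forall>v\<in>rest. 0 \<le> y v"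
proof -
  define u where "u v = max (- y v) 0" for v
  have "rho * u v \<le> (\<Sum>w\<in>rest. A v w * u w)" if v: "v \<in> rest" for v
  proof (cases "0 \<le> y v")
    case True
    thus ?thesis using A_nonneg by (simp add: u_def sum_nonneg)
  next
    case False
    have "- (\<Sum>w\<in>rest. A v w * u w) = (\<Sum>w\<in>rest. A v w * - u w)"
      by (simp add: sum_negf)
    also have "\<dots> \<le> (\<Sum>w\<in>rest. A v w * y w)"
      using A_nonneg by (intro sum_mono mult_left_mono) (auto simp: u_def)
    also have "\<dots> \<le> rho * y v"
      using assms v by fastforce
    finally show ?thesis using False by (simp add: u_def)
  qed
  hence "\<forall>v\<in>rest. u v = 0"
    by (intro rest_subinvariant_zero) (auto simp: u_def)
  thus ?thesis by (auto simp: u_def max_def split: if_splits)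
qed

lemma sum_V_split:
  assumes "\<forall>w. w \<notin> Cbar \<longrightarrow> f w = 0"
  shows "(\<Sum>w\<in>V. A v w * f w) = (\<Sum>w\<in>C. A v w * f w) + (\<Sum>w\<in>rest. A v w * f w)"
proof -
  have "(\<Sum>w\<in>V. A v w * f w) = (\<Sum>w\<in>Cbar. A v w * f w)"
    using finite_V Cbar_subset assms by (intro sum.mono_neutral_right) auto
  also have "\<dots> = (\<Sum>w\<in>rest. A v w * f w) + (\<Sum>w\<in>C. A v w * f w)"
    using finite_V Cbar_subset C_subset by (intro sum.subset_diff) (auto intro: finite_subset)
  finally show ?thesis by simp
qed

lemma closure_eigvec_on_C:
  assumes "closure_eigvec y" and "v \<in> C"
  shows "(\<Sum>w\<in>C. A v w * y w) = rho * y v"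
  using assms sum_V_split[of y v] A_C_rest C_subset Cbar_subset
  unfolding closure_eigvec_def by auto

lemma closure_eigvec_on_rest:
  assumes "closure_eigvec y" and "v \<in> rest"
  shows "rho * y v = (\<Sum>w\<in>C. A v w * y w) + (\<Sum>w\<in>rest. A v w * y w)"
  using assms sum_V_split[of y v] Cbar_subset unfolding closure_eigvec_def by auto

lemma closure_eigvec_pos:
  assumes "closure_eigvec y" and "\<forall>v\<in>C. 0 < y v" and "v \<in> Cbar"
  shows "0 < y v"
proof (cases "v \<in> C")
  case False
  then obtain w0 where w0: "w0 \<in> C" "0 < A v w0"
    using rest_reaches_C assms(3) by blast
  have "0 < (\<Sum>w\<in>C. A v w * y w)"
    using w0 assms(1,2) A_nonneg C_subset Cbar_subset unfolding closure_eigvec_def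
    by (intro sum_pos2[OF finite_C w0(1)]) auto
  moreover have "0 \<le> (\<Sum>w\<in>rest. A v w * y w)"
    using assms(1) A_nonneg Cbar_subset unfolding closure_eigvec_def by (auto intro!: sum_nonneg)
  ultimately have "0 < rho * y v"
    using closure_eigvec_on_rest[OF assms(1)] False assms(3) by fastforce
  thus ?thesis using rho_pos by (simp add: zero_less_mult_iff)
qed (use assms in auto)

lemma closure_eigvec_extend:
  assumes x: "PF_vector C A x"
    and z: "\<forall>v\<in>rest. rho * z v = (\<Sum>w\<in>C. A v w * x w) + (\<Sum>w\<in>rest. A v w * z w)"
    and z_nonneg: "\<forall>v\<in>rest. 0 \<le> z v"
  shows "closure_eigvec (\<lambda>v. if v \<in> C then x v else if v \<in> rest then z v else 0)"
    (is "closure_eigvec ?y")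
proof -
  have supp: "\<forall>v. v \<notin> Cbar \<longrightarrow> ?y v = 0"
    using C_subset by auto
  have y_C: "(\<Sum>w\<in>C. A v w * ?y w) = (\<Sum>w\<in>C. A v w * x w)" for v
    by (intro sum.cong) auto
  have y_rest: "(\<Sum>w\<in>rest. A v w * ?y w) = (\<Sum>w\<in>rest. A v w * z w)" for v
    by (intro sum.cong) auto
  have "(\<Sum>w\<in>V. A v w * ?y w) = rho * ?y v" if v: "v \<in> V" for v
  proof -
    consider "v \<in> C" | "v \<in> rest" | "v \<notin> Cbar" by blast
    thus ?thesis
    proof cases
      case 1
      thus ?thesis
        using x A_C_rest sum_V_split[OF supp, of v] y_C unfolding PF_vector_def by simp
    next
      case 2
      thus ?thesis using z sum_V_split[OF supp, of v] y_C y_rest by simp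
    next
      case 3
      thus ?thesis
        using A_outside_Cbar[OF v 3] sum_V_split[OF supp, of v] supp C_subset
        by (simp add: subset_iff)
    qed
  qed
  thus ?thesis
    unfolding closure_eigvec_def using supp x z_nonneg
    by (auto simp: PF_vector_def less_imp_le)
qed

lemma closure_eigvec_exists:
  obtains y where "closure_eigvec y" and "\<forall>v\<in>Cbar. 0 < y v"
proof -
  obtain x where x: "PF_vector C A x"
    using ex_PF_vector by blast
  define b where "b v = (\<Sum>w\<in>C. A v w * x w)" for v
  obtain z where z: "\<forall>v\<in>rest. rho * z v = b v + (\<Sum>w\<in>rest. A v w * z w)"
    using rest_equation_solvable .
  have "\<forall>v\<in>rest. 0 \<le> b v"
    using x A_nonneg unfolding b_def PF_vector_def
    by (auto intro!: sum_nonneg mult_nonneg_nonneg simp: less_imp_le)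
  hence "\<forall>v\<in>rest. 0 \<le> z v"
    using rest_equation_nonneg z by blast
  with x z have y: "closure_eigvec (\<lambda>v. if v \<in> C then x v else if v \<in> rest then z v else 0)"
    unfolding b_def by (rule closure_eigvec_extend)
  moreover have "\<forall>v\<in>Cbar. 0 < (if v \<in> C then x v else if v \<in> rest then z v else 0)"
    using closure_eigvec_pos[OF y] x unfolding PF_vector_def by auto
  ultimately show ?thesis using that by blast
qed

text \<open>On \<open>C\<close> the two vectors are proportional by Perron--Frobenius; the combination vanishing on
  \<open>C\<close> is then an eigenvector for \<open>rho\<close> on the rest of the closure, hence zero there.\<close>

lemma closure_eigvec_proportional:
  assumes y: "closure_eigvec y" and z: "closure_eigvec z" and z_pos: "\<forall>v\<in>C. 0 < z v"
  obtains t where "\<forall>v. y v = t * z v"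
proof -
  obtain t where t: "\<forall>v\<in>C. y v = t * z v"
    using nonneg_eigenvector_proportional[OF finite_C C_nonempty _ z_pos, of A rho y]
      closure_eigvec_on_C[OF y] closure_eigvec_on_C[OF z] y A_pos_on_C C_subset Cbar_subset
    unfolding closure_eigvec_def by blast
  define e where "e v = y v - t * z v" for v
  have "\<forall>v\<in>rest. (\<Sum>w\<in>rest. A v w * e w) = rho * e v"
  proof
    fix v assume v: "v \<in> rest"
    have y_rest: "(\<Sum>w\<in>rest. A v w * y w) = rho * y v - (\<Sum>w\<in>C. A v w * y w)"
      using closure_eigvec_on_rest[OF y v] by simp
    have z_rest: "(\<Sum>w\<in>rest. A v w * z w) = rho * z v - (\<Sum>w\<in>C. A v w * z w)"
      using closure_eigvec_on_rest[OF z v] by simp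
    have y_C: "(\<Sum>w\<in>C. A v w * y w) = t * (\<Sum>w\<in>C. A v w * z w)"
      using t by (simp add: sum_distrib_left mult.left_commute)
    have "(\<Sum>w\<in>rest. A v w * e w) = (\<Sum>w\<in>rest. A v w * y w) - t * (\<Sum>w\<in>rest. A v w * z w)"
      by (simp add: e_def right_diff_distrib sum_subtractf sum_distrib_left mult.left_commute)
    also have "\<dots> = rho * e v"
      unfolding y_rest z_rest y_C e_def by (simp add: algebra_simps)
    finally show "(\<Sum>w\<in>rest. A v w * e w) = rho * e v" .
  qed
  hence "\<forall>v\<in>rest. e v = 0"
    by (rule rest_eigenvector_zero)
  hence "y v = t * z v" for v
    using t y z unfolding e_def closure_eigvec_def by (cases "v \<in> Cbar") auto
  thus ?thesis using that by blast
qed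

lemma closure_eigvec_scale:
  assumes "closure_eigvec y" and "0 \<le> c"
  shows "closure_eigvec (\<lambda>v. c * y v)"
proof -
  have "(\<Sum>w\<in>V. A v w * (c * y w)) = c * (\<Sum>w\<in>V. A v w * y w)" for v
    by (simp add: sum_distrib_left mult.left_commute)
  thus ?thesis using assms unfolding closure_eigvec_def by simp
qed

lemma ex_unique_normalized_closure_eigvec:
  obtains xF where "normalized_closure_eigvec xF" and "\<forall>v\<in>Cbar. 0 < xF v"
    and "\<forall>y. normalized_closure_eigvec y \<longrightarrow> y = xF"
proof -
  obtain y0 where y0: "closure_eigvec y0" and y0_pos: "\<forall>v\<in>Cbar. 0 < y0 v"
    using closure_eigvec_exists .
  obtain c where c: "c \<in> C"
    using C_nonempty by blast
  define T where "T = sum y0 V"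
  have "0 < T"
    unfolding T_def using c C_subset Cbar_subset y0 y0_pos unfolding closure_eigvec_def
    by (intro sum_pos2[OF finite_V]) auto
  define xF where "xF v = inverse T * y0 v" for v
  have "closure_eigvec xF"
    unfolding xF_def using closure_eigvec_scale[OF y0] \<open>0 < T\<close> by simp
  moreover have "sum xF V = 1"
    using \<open>0 < T\<close> by (simp add: xF_def T_def sum_distrib_left[symmetric])
  moreover have "\<forall>v\<in>Cbar. 0 < xF v"
    using y0_pos \<open>0 < T\<close> by (simp add: xF_def)
  moreover have "y = xF" if y: "closure_eigvec y" and "sum y V = 1" for y
  proof -
    obtain t where t: "\<forall>v. y v = t * y0 v"
      using closure_eigvec_proportional[OF y y0] y0_pos C_subset by blast
    hence "t * T = 1"
      using \<open>sum y V = 1\<close> by (simp add: T_def sum_distrib_left)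
    thus ?thesis
      using t \<open>0 < T\<close> by (auto simp: xF_def field_simps)
  qed
  ultimately show ?thesis using that unfolding normalized_closure_eigvec_iff by blast
qed

lemma closure_eigvec_multiple_of_PF_vector:
  assumes y: "closure_eigvec y" and y_pos: "\<forall>v\<in>C. 0 < y v" and x: "PF_vector C A x"
  shows "\<exists>c>0. \<forall>v\<in>C. y v = c * x v"
proof -
  have "\<exists>c\<ge>0. \<forall>v\<in>C. y v = c * x v"
  proof (rule nonneg_eigenvector_proportional[OF finite_C C_nonempty])
    show "\<forall>v\<in>C. 0 \<le> y v" using y_pos by (simp add: less_imp_le)
    show "\<forall>v\<in>C. (\<Sum>w\<in>C. A v w * y w) = rho * y v" using closure_eigvec_on_C[OF y] by blast
  qed (use x A_pos_on_C in \<open>auto simp: PF_vector_def\<close>)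
  then obtain c where "0 \<le> c" and c: "\<forall>v\<in>C. y v = c * x v"
    by blast
  moreover obtain v where "v \<in> C"
    using C_nonempty by blast
  ultimately have "0 < c"
    using y_pos by (metis less_eq_real_def mult_zero_left)
  thus ?thesis using c by blast
qed

end

section \<open>Components of a finite \<open>k\<close>-graph\<close>

lemma kgraph_unit_laws:
  assumes kg: "kgraph P r s cmp d" and l: "l \<in> P"
  shows "r l \<in> P" and "s l \<in> P" and "s (r l) = r l" and "r (s l) = s l"
    and "cmp (r l) l = l" and "cmp l (s l) = l"
    and "d (r l) = (\<lambda>_. 0)" and "d (s l) = (\<lambda>_. 0)"
proof -
  show rs: "r l \<in> P" "s l \<in> P" "s (r l) = r l" "r (s l) = s l"
    and "cmp (r l) l = l" "cmp l (s l) = l"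
    using assms unfolding kgraph_def by auto
  have deg: "\<forall>l\<in>P. d (r l) = (\<lambda>_. 0)"
    using kg unfolding kgraph_def by blast
  show "d (r l) = (\<lambda>_. 0)"
    using deg l by blast
  show "d (s l) = (\<lambda>_. 0)"
    using deg rs(2,4) by metis
qed

lemma kgraph_degree_zero:
  assumes kg: "kgraph P r s cmp d" and l: "l \<in> P" "d l = (\<lambda>_. 0)"
  shows "r l = l" and "s l = l"
proof -
  note units = kgraph_unit_laws[OF kg l(1)]
  define Q where "Q = (\<lambda>(u, t). u \<in> P \<and> t \<in> P \<and> s u = r t \<and>
      d u = (\<lambda>_. 0) \<and> d t = (\<lambda>_. 0) \<and> l = cmp u t)"
  have "\<forall>l\<in>P. \<forall>m n. d l = (\<lambda>i. m i + n i) \<longrightarrow> (\<exists>!ut. case ut of (u, t) \<Rightarrow>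
      u \<in> P \<and> t \<in> P \<and> s u = r t \<and> d u = m \<and> d t = n \<and> l = cmp u t)"
    using kg unfolding kgraph_def by blast
  hence "\<exists>!ut. Q ut"
    using l unfolding Q_def by simp
  moreover have "Q (r l, l)" and "Q (l, s l)"
    unfolding Q_def using l units by auto
  ultimately have "(r l, l) = (l, s l)"
    by metis
  thus "r l = l" and "s l = l" by simp_all
qed

lemma kgraph_range_source_in_verts:
  assumes "kgraph P r s cmp d" and "p \<in> P"
  shows "r p \<in> verts P d" and "s p \<in> verts P d"
  using kgraph_unit_laws[OF assms] unfolding verts_def by auto

lemma kgraph_verts:
  assumes "kgraph P r s cmp d" and "v \<in> verts P d"
  shows "v \<in> P" and "r v = v" and "s v = v"
  using assms kgraph_degree_zero unfolding verts_def by auto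

lemma kgraph_comp:
  assumes "kgraph P r s cmp d" and "p \<in> P" and "q \<in> P" and "s p = r q"
  shows "\<exists>c\<in>P. r c = r p \<and> s c = s q \<and> d c = (\<lambda>i. d p i + d q i)"
  using assms unfolding kgraph_def by (intro bexI[of _ "cmp p q"]) auto

lemma vle_trans: "kgraph P r s cmp d \<Longrightarrow> vle P r s u v \<Longrightarrow> vle P r s v w \<Longrightarrow> vle P r s u w"
  unfolding vle_def by (metis kgraph_comp)

lemma component_subset_verts: "is_component P r s d C \<Longrightarrow> C \<subseteq> verts P d"
  unfolding is_component_def by auto

lemma vle_refl: "kgraph P r s cmp d \<Longrightarrow> v \<in> verts P d \<Longrightarrow> vle P r s v v"
  unfolding vle_def using kgraph_verts by metis

lemma component_nonempty:
  assumes "kgraph P r s cmp d" and "is_component P r s d C"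
  shows "C \<noteq> {}"
proof -
  obtain v where "v \<in> verts P d" and "C = {w \<in> verts P d. vle P r s v w \<and> vle P r s w v}"
    using assms(2) unfolding is_component_def by blast
  thus ?thesis using vle_refl[OF assms(1)] by blast
qed

lemma component_vle:
  assumes kg: "kgraph P r s cmp d" and "is_component P r s d C" and "v \<in> C" and "w \<in> C"
  shows "vle P r s v w"
proof -
  obtain v0 where "C = {w \<in> verts P d. vle P r s v0 w \<and> vle P r s w v0}"
    using assms(2) unfolding is_component_def by blast
  hence "vle P r s v v0" and "vle P r s v0 w"
    using assms(3,4) by auto
  thus ?thesis by (rule vle_trans[OF kg])
qed

lemma component_closed:
  assumes kg: "kgraph P r s cmp d" and "is_component P r s d C" and "v \<in> C" and "w \<in> verts P d"
    and "vle P r s v w" and "vle P r s w v"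
  shows "w \<in> C"
proof -
  obtain v0 where C: "C = {w \<in> verts P d. vle P r s v0 w \<and> vle P r s w v0}"
    using assms(2) unfolding is_component_def by blast
  hence "vle P r s v0 v" and "vle P r s v v0"
    using assms(3) by auto
  hence "vle P r s v0 w" and "vle P r s w v0"
    using vle_trans[OF kg] assms(5,6) by blast+
  thus ?thesis using C assms(4) by blast
qed

lemma AF_nonneg: "0 \<le> AF P r s d F v w"
  unfolding AF_def vmat_def by (intro sum_nonneg) auto

lemma AF_pos_imp_vle:
  assumes "0 < AF P r s d F v w"
  shows "vle P r s v w"
proof (rule ccontr)
  assume "\<not> vle P r s v w"
  hence "{l \<in> P. d l = j \<and> r l = v \<and> s l = w} = {}" for j
    unfolding vle_def by auto
  hence "AF P r s d F v w = 0"
    unfolding AF_def vmat_def by (simp only: card.empty of_nat_0 sum.neutral_const)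
  thus False using assms by simp
qed

lemma AF_pos_of_path:
  assumes "kgraph P r s cmp d" and "well_chosen P r s d F" and "p \<in> P" and "d p \<noteq> (\<lambda>_. 0)"
  shows "0 < AF P r s d F (r p) (s p)"
proof -
  have "r p \<in> verts P d" and "s p \<in> verts P d"
    using kgraph_range_source_in_verts[OF assms(1,3)] by simp_all
  thus ?thesis using assms(2-4) unfolding well_chosen_def by blast
qed

text \<open>Nontriviality is what provides a loop of nonzero degree at a vertex of \<open>C\<close>: either through
  another vertex of \<open>C\<close>, or, if \<open>C = {v}\<close>, as a morphism of \<open>C\<Lambda>C\<close> other than \<open>v\<close>.\<close>

lemma nontrivial_component_loop:
  assumes kg: "kgraph P r s cmp d" and C: "nontrivial_component P r s d C" and v: "v \<in> C"
  shows "\<exists>p\<in>P. r p = v \<and> s p = v \<and> d p \<noteq> (\<lambda>_. 0)"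
proof -
  have Cc: "is_component P r s d C" and V: "v \<in> verts P d"
    using C v component_subset_verts unfolding nontrivial_component_def by blast+
  show ?thesis
  proof (cases "C = {v}")
    case True
    have "v \<in> paths_between P r s C C"
      using kgraph_verts[OF kg V] True unfolding paths_between_def by simp
    moreover have "paths_between P r s C C \<noteq> {v}"
      using C V unfolding nontrivial_component_def by blast
    ultimately obtain p where "p \<in> P" "r p = v" "s p = v" "p \<noteq> v"
      using True unfolding paths_between_def by blast
    thus ?thesis using kgraph_degree_zero[OF kg] by metis
  next
    case False
    then obtain u where u: "u \<in> C" "u \<noteq> v"
      using v by blast
    obtain p q where p: "p \<in> P" "r p = v" "s p = u" and q: "q \<in> P" "r q = u" "s q = v"
      using component_vle[OF kg Cc v u(1)] component_vle[OF kg Cc u(1) v] unfolding vle_def by blast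
    have "d p \<noteq> (\<lambda>_. 0)"
      using kgraph_degree_zero[OF kg p(1)] p u(2) by metis
    moreover obtain c where "c \<in> P" "r c = v" "s c = v" "d c = (\<lambda>i. d p i + d q i)"
      using kgraph_comp[OF kg p(1) q(1)] p q by auto
    ultimately show ?thesis by (metis add_is_0)
  qed
qed

lemma AF_pos_on_nontrivial_component:
  assumes kg: "kgraph P r s cmp d" and wc: "well_chosen P r s d F"
    and C: "nontrivial_component P r s d C" and "v \<in> C" and "w \<in> C"
  shows "0 < AF P r s d F v w"
proof (cases "v = w")
  case True
  thus ?thesis
    using nontrivial_component_loop[OF kg C \<open>v \<in> C\<close>] AF_pos_of_path[OF kg wc] by metis
next
  case False
  obtain p where "p \<in> P" "r p = v" "s p = w"
    using component_vle[OF kg _ assms(4,5)] C unfolding nontrivial_component_def vle_def by blast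
  moreover have "d p \<noteq> (\<lambda>_. 0)"
    using kgraph_degree_zero[OF kg \<open>p \<in> P\<close>] calculation False by metis
  ultimately show ?thesis using AF_pos_of_path[OF kg wc] by metis
qed

lemma mem_vclosure: "w \<in> vclosure P r s d C \<longleftrightarrow> w \<in> verts P d \<and> (\<exists>p\<in>P. r p = w \<and> s p \<in> C)"
  unfolding vclosure_def paths_between_def by auto

lemma subset_vclosure:
  assumes "kgraph P r s cmp d" and "C \<subseteq> verts P d"
  shows "C \<subseteq> vclosure P r s d C"
proof
  fix v assume "v \<in> C"
  hence "v \<in> verts P d" using assms(2) by blast
  thus "v \<in> vclosure P r s d C"
    using kgraph_verts[OF assms(1) \<open>v \<in> verts P d\<close>] \<open>v \<in> C\<close> unfolding mem_vclosure by auto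
qed

lemma vclosure_subset_verts: "vclosure P r s d C \<subseteq> verts P d"
  unfolding vclosure_def by auto

lemma AF_component_to_vclosure:
  assumes kg: "kgraph P r s cmp d" and C: "is_component P r s d C"
    and v: "v \<in> C" and w: "w \<in> vclosure P r s d C" and "0 < AF P r s d F v w"
  shows "w \<in> C"
proof -
  obtain q where q: "q \<in> P" "r q = w" "s q \<in> C"
    using w unfolding mem_vclosure by blast
  have "vle P r s w (s q)"
    using q unfolding vle_def by blast
  hence "vle P r s w v"
    by (rule vle_trans[OF kg _ component_vle[OF kg C q(3) v]])
  moreover have "w \<in> verts P d"
    using w by (simp add: mem_vclosure)
  ultimately show ?thesis
    using component_closed[OF kg C v _ AF_pos_imp_vle[OF assms(5)]] by blast
qed

lemma AF_outside_vclosure: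
  assumes kg: "kgraph P r s cmp d" and v: "v \<notin> vclosure P r s d C" "v \<in> verts P d"
    and w: "w \<in> vclosure P r s d C"
  shows "AF P r s d F v w = 0"
proof (rule ccontr)
  assume "AF P r s d F v w \<noteq> 0"
  hence "0 < AF P r s d F v w"
    using AF_nonneg[of P r s d F v w] by linarith
  hence "vle P r s v w"
    by (rule AF_pos_imp_vle)
  then obtain p where p: "p \<in> P" "r p = v" "s p = w"
    unfolding vle_def by blast
  obtain q where q: "q \<in> P" "r q = w" "s q \<in> C"
    using w unfolding mem_vclosure by blast
  obtain c where c: "c \<in> P" "r c = r p" "s c = s q"
    using kgraph_comp[OF kg p(1) q(1)] p(3) q(2) by auto
  have "v \<in> vclosure P r s d C"
    unfolding mem_vclosure using v(2) c p(2) q(3) by auto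
  thus False using v(1) by contradiction
qed

lemma vclosure_reaches_component:
  assumes "kgraph P r s cmp d" and "well_chosen P r s d F"
    and "v \<in> vclosure P r s d C" and "v \<notin> C"
  shows "\<exists>w\<in>C. 0 < AF P r s d F v w"
proof -
  obtain q where q: "q \<in> P" "r q = v" "s q \<in> C"
    using assms(3) unfolding mem_vclosure by blast
  have "d q \<noteq> (\<lambda>_. 0)"
  proof
    assume "d q = (\<lambda>_. 0)"
    hence "r q = s q"
      using kgraph_degree_zero[OF assms(1) q(1)] by simp
    thus False using q assms(4) by simp
  qed
  thus ?thesis using AF_pos_of_path[OF assms(1,2) q(1)] q by blast
qed

lemma harmonic_component_of_F_harmonic:
  assumes kg: "kgraph P r s cmp d" and fin: "finite_kgraph P d" and wc: "well_chosen P r s d F"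
    and harm: "F_harmonic P r s d F C"
  shows "harmonic_component (verts P d) C (vclosure P r s d C) (AF P r s d F)"
proof -
  have C: "nontrivial_component P r s d C"
    using harm unfolding F_harmonic_def by blast
  hence Cc: "is_component P r s d C"
    unfolding nontrivial_component_def by blast
  show ?thesis
  proof
    show "finite (verts P d)"
      using fin unfolding finite_kgraph_def verts_def by blast
    show "C \<noteq> {}"
      by (rule component_nonempty[OF kg Cc])
    show "C \<subseteq> vclosure P r s d C"
      by (rule subset_vclosure[OF kg component_subset_verts[OF Cc]])
    show "vclosure P r s d C \<subseteq> verts P d"
      by (rule vclosure_subset_verts)
    show "0 \<le> AF P r s d F v w" for v w
      by (rule AF_nonneg)
    show "0 < AF P r s d F v w" if "v \<in> C" "w \<in> C" for v w
      using AF_pos_on_nontrivial_component[OF kg wc C that] .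
    show "AF P r s d F v w = 0" if "v \<in> C" "w \<in> vclosure P r s d C - C" for v w
      using AF_component_to_vclosure[OF kg Cc that(1), of w F] that(2) AF_nonneg[of P r s d F v w]
      by fastforce
    show "AF P r s d F v w = 0"
      if "v \<in> verts P d" "v \<notin> vclosure P r s d C" "w \<in> vclosure P r s d C" for v w
      by (rule AF_outside_vclosure[OF kg that(2,1,3)])
    show "\<exists>w\<in>C. 0 < AF P r s d F v w" if "v \<in> vclosure P r s d C - C" for v
      using vclosure_reaches_component[OF kg wc] that by blast
    show "spec_rad (vclosure P r s d C - C) (AF P r s d F) < spec_rad C (AF P r s d F)"
      if "vclosure P r s d C - C \<noteq> {}"
      using harm that unfolding F_harmonic_def by blast
  qed
qed

theorem lemma7p6:
  fixes P :: "'p set" and r s :: "'p \<Rightarrow> 'p" and cmp :: "'p \<Rightarrow> 'p \<Rightarrow> 'p"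
    and d :: "'p \<Rightarrow> ('k::finite \<Rightarrow> nat)" and F :: "('k \<Rightarrow> nat) list" and C :: "'p set"
  assumes "kgraph P r s cmp d"
    and "finite_kgraph P d"
    and "no_sources P r d"
    and "well_chosen P r s d F"
    and "F_harmonic P r s d F C"
  shows "\<exists>xF :: 'p \<Rightarrow> real.
     (\<lambda>y. (\<forall>v\<in>verts P d. y v \<ge> 0) \<and> (\<forall>v. v \<notin> verts P d \<longrightarrow> y v = 0) \<and>
          (\<Sum>v\<in>verts P d. y v) = 1 \<and>
          (\<forall>v\<in>verts P d. (\<Sum>w\<in>verts P d. AF P r s d F v w * y w)
                          = spec_rad C (AF P r s d F) * y v) \<and>
          (\<forall>v\<in>verts P d. v \<notin> vclosure P r s d C \<longrightarrow> y v = 0)) xF \<and>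
     (\<forall>y. ((\<forall>v\<in>verts P d. y v \<ge> 0) \<and> (\<forall>v. v \<notin> verts P d \<longrightarrow> y v = 0) \<and>
          (\<Sum>v\<in>verts P d. y v) = 1 \<and>
          (\<forall>v\<in>verts P d. (\<Sum>w\<in>verts P d. AF P r s d F v w * y w)
                          = spec_rad C (AF P r s d F) * y v) \<and>
          (\<forall>v\<in>verts P d. v \<notin> vclosure P r s d C \<longrightarrow> y v = 0)) \<longrightarrow> y = xF) \<and>
     (\<forall>v\<in>vclosure P r s d C. xF v > 0) \<and>
     (\<exists>x. PF_vector C (AF P r s d F) x) \<and>
     (\<forall>x. PF_vector C (AF P r s d F) x \<longrightarrow> (\<exists>c>0. \<forall>v\<in>C. xF v = c * x v))"
proof -
  interpret harmonic_component "verts P d" C "vclosure P r s d C" "AF P r s d F"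
    using harmonic_component_of_F_harmonic assms(1,2,4,5) .
  obtain xF where xF: "normalized_closure_eigvec xF" "\<forall>v\<in>vclosure P r s d C. 0 < xF v"
    and unique: "\<forall>y. normalized_closure_eigvec y \<longrightarrow> y = xF"
    by (rule ex_unique_normalized_closure_eigvec)
  moreover have "\<forall>x. PF_vector C (AF P r s d F) x \<longrightarrow> (\<exists>c>0. \<forall>v\<in>C. xF v = c * x v)"
    using closure_eigvec_multiple_of_PF_vector xF C_subset
    unfolding normalized_closure_eigvec_iff by blast
  ultimately show ?thesis
    using ex_PF_vector unfolding normalized_closure_eigvec_def by blast
qed

end
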